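(* Let $N\ge 1$, $\lambda>0$, and let $(X_t^{\lambda,\mathbf{x},\mathbf{v}},V_t^{\lambda,\mathbf{v}})$ and $\bar X_t^{\mathbf{x},\mathbf{v}}$ be as described in the context. For every $t>0$ there exist constants $K>0$ (possibly depending on $t$, but independent of $\lambda$) and $c_1>0$ such that $$\left|\mathbb{E}\big[f(X_t^{\lambda,\mathbf{x},\mathbf{v}})\big]-\mathbb{E}\big[f(\bar X_t^{\mathbf{x},\mathbf{v}})\big]\right|\le K\|f\|\left(\frac{1}{\sqrt{\lambda}}+e^{-c_1\sqrt{\lambda}}\right)$$ for all $\lambda>0$, all $\mathbf{x}\in\mathbb{R}^N$, all $\mathbf{v}\in\{-1,+1\}^N$ and all $f\in C^1_b(\mathbb{R}^N)$, where $\|f\|:=\|f\|_\infty+\sum_{i=1}^N\|\partial_{x_i}f\|_\infty$.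
   Context: State space $\chi=\{-1,1\}^N$; $\mathbf{e}:=(1,\dots,1)\in\chi$. For $\mathbf{v}=(v_1,\dots,v_N)\in\chi$ let $\mathbf{v}_{(i)}:=(v_1,\dots,-v_i,\dots,v_N)$. Let $\mathcal{P}$ be a transition matrix on $\chi$ such that $\mathcal{P}(\mathbf{e},\mathbf{e})=\mathcal{P}(-\mathbf{e},-\mathbf{e})=1$ and, for every $\mathbf{v}\neq\pm\mathbf{e}$, $\mathcal{P}(\mathbf{v},\mathbf{v}')>0$ if $\mathbf{v}'=\mathbf{v}_{(i)}$ for some $1\le i\le N$ and $\mathcal{P}(\mathbf{v},\mathbf{v}')=0$ otherwise. The fast process $V_t^{\lambda,\mathbf{v}}$ is the càdlàg continuous-time Markov chain on $\chi$ with $V_0^{\lambda,\mathbf{v}}=\mathbf{v}$ which, each time a homogeneous Poisson clock of rate $N\lambda$ rings, jumps according to $\mathcal{P}$. The slow process solves $\frac{d}{dt}X_t^{\lambda,\mathbf{x},\mathbf{v}}=V_t^{\lambda,\mathbf{v}}$, $X_0^{\lambda,\mathbf{x},\mathbf{v}}=\mathbf{x}\in\mathbb{R}^N$. Let $q(\mathbf{v})\in[0,1]$ be the probability that $V^{\lambda,\mathbf{v}}$ is eventually absorbed in $-\mathbf{e}$ (this does not depend on $\lambda$; with probability one the chain is absorbed in $\mathbf{e}$ or $-\mathbf{e}$). The averaged process is $\bar X_t^{\mathbf{x},\mathbf{v}}=\mathbf{x}+t\zeta^{\mathbf{v}}$, where $\zeta^{\mathbf{v}}$ is a random variable equal to $-\mathbf{e}$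 with probability $q(\mathbf{v})$ and to $\mathbf{e}$ with probability $1-q(\mathbf{v})$; thus $\mathbb{E}[f(\bar X_t^{\mathbf{x},\mathbf{v}})]=q(\mathbf{v})f(\mathbf{x}-t\mathbf{e})+(1-q(\mathbf{v}))f(\mathbf{x}+t\mathbf{e})$. $C^1_b(\mathbb{R}^N)$ denotes the bounded continuous real functions with bounded continuous first derivatives. *)

theory Defs
  imports "HOL-Probability.Probability"
begin

text \<open>States: vectors in real^'n with all coordinates in {-1,1}; N = CARD('n).\<close>

definition chi :: "(real^'n) set" where
  "chi = {v. \<forall>i. v $ i = 1 \<or> v $ i = -1}"

definition ones :: "real^'n" where
  "ones = (\<chi> i. 1)"

definition flip :: "'n \<Rightarrow> real^'n \<Rightarrow> real^'n" where
  "flip i v = (\<chi> j. if j = i then - (v $ j) else v $ j)"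

definition flip_kernel :: "(real^'n \<Rightarrow> real^'n \<Rightarrow> real) \<Rightarrow> bool" where
  "flip_kernel P \<longleftrightarrow>
     (\<forall>v\<in>chi. \<forall>w\<in>chi. P v w \<ge> 0) \<and>
     (\<forall>v\<in>chi. (\<Sum>w\<in>chi. P v w) = 1) \<and>
     P ones ones = 1 \<and> P (- ones) (- ones) = 1 \<and>
     (\<forall>v\<in>chi. v \<noteq> ones \<and> v \<noteq> - ones \<longrightarrow>
        (\<forall>w\<in>chi. ((\<exists>i. w = flip i v) \<longrightarrow> P v w > 0) \<and>
                  ((\<nexists>i. w = flip i v) \<longrightarrow> P v w = 0)))"

fun Pn :: "(real^'n \<Rightarrow> real^'n \<Rightarrow> real) \<Rightarrow> nat \<Rightarrow> real^'n \<Rightarrow> real^'n \<Rightarrow> real" where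
  "Pn P 0 v w = (if v = w then 1 else 0)"
| "Pn P (Suc n) v w = (\<Sum>u\<in>chi. Pn P n v u * P u w)"

text \<open>Absorption probability in -e (-e is absorbing, so Pn P n v (-e) increases to it).\<close>
definition absorb_prob :: "(real^'n \<Rightarrow> real^'n \<Rightarrow> real) \<Rightarrow> real^'n \<Rightarrow> real" where
  "absorb_prob P v = lim (\<lambda>n. Pn P n v (- ones))"

text \<open>Transition probabilities at time t of the chain jumping according to P at the
  rings of a Poisson clock of rate N*lam (uniformization formula).\<close>
definition Pt :: "(real^'n \<Rightarrow> real^'n \<Rightarrow> real) \<Rightarrow> real \<Rightarrow> real \<Rightarrow> real^'n \<Rightarrow> real^'n \<Rightarrow> real" where
  "Pt P lam t v w = (\<Sum>n. exp (- (real CARD('n) * lam * t)) * (real CARD('n) * lam * t) ^ n / fact n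
                         * Pn P n v w)"

definition cadlag :: "(real \<Rightarrow> 'b::topological_space) \<Rightarrow> bool" where
  "cadlag g \<longleftrightarrow> (\<forall>s\<ge>0. continuous (at_right s) g) \<and>
                 (\<forall>s>0. \<exists>l. (g \<longlongrightarrow> l) (at_left s))"

text \<open>V is (a version of) the fast process V^{lam,v} on the probability space M:
  cadlag chi-valued paths, V_0 = v, and finite-dimensional distributions of the
  continuous-time Markov chain with transition function Pt.\<close>
definition fast_process ::
  "(real^'n \<Rightarrow> real^'n \<Rightarrow> real) \<Rightarrow> real \<Rightarrow> real^'n \<Rightarrow> 'a measure \<Rightarrow> (real \<Rightarrow> 'a \<Rightarrow> real^'n) \<Rightarrow> bool" where
  "fast_process P lam v M V \<longleftrightarrow>
     prob_space M \<and>
     (\<forall>t\<ge>0. V t \<in> measurable M (count_space UNIV)) \<and>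
     (\<forall>\<omega>\<in>space M. V 0 \<omega> = v \<and> (\<forall>t\<ge>0. V t \<omega> \<in> chi) \<and> cadlag (\<lambda>t. V t \<omega>)) \<and>
     (\<forall>(n::nat) (ts::nat \<Rightarrow> real) (ws::nat \<Rightarrow> real^'n).
        0 \<le> ts 0 \<longrightarrow> (\<forall>i<n. ts i < ts (Suc i)) \<longrightarrow> (\<forall>i\<le>n. ws i \<in> chi) \<longrightarrow>
        measure M {\<omega>\<in>space M. \<forall>i\<le>n. V (ts i) \<omega> = ws i} =
          (\<Prod>i\<le>n. Pt P lam (ts i - (if i = 0 then 0 else ts (i - 1)))
                              (if i = 0 then v else ws (i - 1)) (ws i)))"

definition slow_process :: "(real \<Rightarrow> 'a \<Rightarrow> real^'n) \<Rightarrow> real^'n \<Rightarrow> real \<Rightarrow> 'a \<Rightarrow> real^'n" where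
  "slow_process V x t \<omega> = x + integral {0..t} (\<lambda>s. V s \<omega>)"

definition C1b :: "(real^'n \<Rightarrow> real) \<Rightarrow> (real^'n \<Rightarrow> real^'n \<Rightarrow> real) \<Rightarrow> bool" where
  "C1b f f' \<longleftrightarrow> continuous_on UNIV f \<and> bounded (range f) \<and>
     (\<forall>x. (f has_derivative f' x) (at x)) \<and>
     (\<forall>i. continuous_on UNIV (\<lambda>x. f' x (axis i 1)) \<and> bounded (range (\<lambda>x. f' x (axis i 1))))"

definition C1norm :: "(real^'n \<Rightarrow> real) \<Rightarrow> (real^'n \<Rightarrow> real^'n \<Rightarrow> real) \<Rightarrow> real" where
  "C1norm f f' = (SUP x. \<bar>f x\<bar>) + (\<Sum>i\<in>UNIV. SUP x. \<bar>f' x (axis i 1)\<bar>)"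

end

theory Submission
  imports Defs
begin

text \<open>
  Every transient state reaches \<open>e\<close> in at most \<open>N\<close> flips with positive probability, so the
  jump chain is still transient after \<open>n\<close> jumps with probability at most \<open>2 \<rho>\<^sup>n\<close>, \<open>\<rho> < 1\<close>.
  The number of jumps up to time \<open>s\<close> is Poisson distributed with mean \<open>N \<lambda> s\<close>; hence the
  probabilities that the fast process is absorbed in \<open>-e\<close>, resp. \<open>e\<close>, by time \<open>s\<close> fall short
  of \<open>q(v)\<close>, resp. \<open>1 - q(v)\<close>, by at most \<open>2 exp (- N \<lambda> s (1 - \<rho>))\<close> in total.
  On the event that \<open>V\<close> sits in its absorbing state \<open>a\<close> from time \<open>s\<close> on, \<open>X\<^sub>t\<close> lies within
  \<open>2 N s\<close> of \<open>x + t a\<close>, which costs the Lipschitz constant of \<open>f\<close> times \<open>2 N s\<close>; the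
  complementary event costs \<open>2 \<parallel>f\<parallel>\<^sub>\<infinity>\<close> times its probability. The choice
  \<open>s = 1 / sqrt \<lambda>\<close> gives the bound, and for \<open>t < 1 / sqrt \<lambda>\<close> the trivial bound
  \<open>2 \<parallel>f\<parallel>\<^sub>\<infinity>\<close> suffices.
\<close>

section \<open>The jump chain\<close>

lemma finite_chi [simp]: "finite (chi :: (real^'n) set)"
proof -
  have "chi \<subseteq> range (\<lambda>b::'n \<Rightarrow> bool. \<chi> i. if b i then (1::real) else -1)"
  proof
    fix v :: "real^'n" assume "v \<in> chi"
    then have "v = (\<chi> i. if v $ i = 1 then 1 else -1)"
      by (auto simp: chi_def vec_eq_iff)
    then show "v \<in> range (\<lambda>b::'n \<Rightarrow> bool. \<chi> i. if b i then (1::real) else -1)"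
      by (intro image_eqI[where x = "\<lambda>i. v $ i = 1"]) simp_all
  qed
  then show ?thesis
    by (rule finite_subset) simp
qed

lemma ones_in_chi [simp]: "ones \<in> chi" "- ones \<in> chi"
  by (auto simp: chi_def ones_def)

lemma ones_neq_neg_ones [simp]: "ones \<noteq> - (ones :: real^'n)" "- ones \<noteq> (ones :: real^'n)"
  by (auto simp: ones_def vec_eq_iff)

lemma flip_in_chi: "v \<in> chi \<Longrightarrow> flip i v \<in> chi"
  by (auto simp: chi_def flip_def)

lemma norm_le_card_if_in_chi: "(v :: real^'n) \<in> chi \<Longrightarrow> norm v \<le> real CARD('n)"
proof -
  assume v: "v \<in> chi"
  have "norm v \<le> (\<Sum>i\<in>UNIV. \<bar>v $ i\<bar>)"
    by (rule norm_le_l1_cart)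
  also have "\<dots> = (\<Sum>i\<in>(UNIV :: 'n set). 1)"
  proof (rule sum.cong)
    fix i
    have "v $ i = 1 \<or> v $ i = -1"
      using v by (simp add: chi_def)
    then show "\<bar>v $ i\<bar> = 1"
      by auto
  qed simp
  finally show ?thesis
    by simp
qed

definition num_neg :: "real^'n \<Rightarrow> nat" where
  "num_neg u = card {i. u $ i = -1}"

lemma num_neg_le_card: "num_neg (u :: real^'n) \<le> CARD('n)"
  unfolding num_neg_def by (rule card_mono) auto

lemma num_neg_eq_0_imp_ones: "u \<in> chi \<Longrightarrow> num_neg u = 0 \<Longrightarrow> u = ones"
  unfolding num_neg_def chi_def ones_def by (auto simp: vec_eq_iff)

lemma num_neg_flip: "u $ i = -1 \<Longrightarrow> num_neg (flip i u) = num_neg u - 1"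
proof -
  assume i: "u $ i = -1"
  then have "{j. flip i u $ j = -1} = {j. u $ j = -1} - {i}"
    by (auto simp: flip_def)
  then show ?thesis
    using i unfolding num_neg_def by simp
qed

definition transient :: "(real^'n) set" where
  "transient = chi - {ones, - ones}"

locale flip_chain =
  fixes P :: "real^'n \<Rightarrow> real^'n \<Rightarrow> real"
  assumes flip_kernel: "flip_kernel P"
begin

lemma P_nonneg: "v \<in> chi \<Longrightarrow> w \<in> chi \<Longrightarrow> 0 \<le> P v w"
  using flip_kernel by (auto simp: flip_kernel_def)

lemma P_row_sum: "v \<in> chi \<Longrightarrow> (\<Sum>w\<in>chi. P v w) = 1"
  using flip_kernel by (auto simp: flip_kernel_def)

lemma P_flip_pos: "u \<in> chi \<Longrightarrow> u \<noteq> ones \<Longrightarrow> u \<noteq> - ones \<Longrightarrow> 0 < P u (flip i u)"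
  using flip_kernel flip_in_chi[of u i] unfolding flip_kernel_def by blast

lemma P_absorbing:
  assumes a: "a \<in> {ones, - ones}" and w: "w \<in> chi"
  shows "P a w = (if w = a then 1 else 0)"
proof -
  have a_chi: "a \<in> chi" and "P a a = 1"
    using a flip_kernel by (auto simp: flip_kernel_def)
  then have "(\<Sum>u\<in>chi - {a}. P a u) = 0"
    using P_row_sum[OF a_chi] sum.remove[OF finite_chi a_chi, of "P a"] by simp
  then have "\<forall>u\<in>chi - {a}. P a u = 0"
    using P_nonneg[OF a_chi] by (subst (asm) sum_nonneg_eq_0_iff) auto
  then show ?thesis
    using \<open>P a a = 1\<close> w by auto
qed

lemma Pn_nonneg: "v \<in> chi \<Longrightarrow> w \<in> chi \<Longrightarrow> 0 \<le> Pn P n v w"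
  by (induction n arbitrary: w) (auto intro!: sum_nonneg mult_nonneg_nonneg P_nonneg)

lemma Pn_row_sum: "v \<in> chi \<Longrightarrow> (\<Sum>w\<in>chi. Pn P n v w) = 1"
proof (induction n)
  case 0
  then show ?case
    by (simp add: sum.delta)
next
  case (Suc n)
  have "(\<Sum>w\<in>chi. Pn P (Suc n) v w) = (\<Sum>u\<in>chi. \<Sum>w\<in>chi. Pn P n v u * P u w)"
    unfolding Pn.simps by (rule sum.swap)
  also have "\<dots> = (\<Sum>u\<in>chi. Pn P n v u)"
    by (simp add: sum_distrib_left[symmetric] P_row_sum)
  finally show ?case
    using Suc by simp
qed

lemma Pn_le_one: "v \<in> chi \<Longrightarrow> w \<in> chi \<Longrightarrow> Pn P n v w \<le> 1"
  using member_le_sum[of w chi "Pn P n v"] Pn_nonneg Pn_row_sum by simp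

lemma Pn_one: "v \<in> chi \<Longrightarrow> Pn P 1 v w = P v w"
  by (simp add: if_distrib[of "\<lambda>x. x * _"] sum.delta' cong: if_cong)

lemma Pn_absorbing:
  assumes a: "a \<in> {ones, - ones}" and w: "w \<in> chi"
  shows "Pn P n a w = (if w = a then 1 else 0)"
  using w
proof (induction n arbitrary: w)
  case 0
  then show ?case
    by auto
next
  case (Suc n)
  have "Pn P (Suc n) a w = (\<Sum>u\<in>chi. (if u = a then 1 else 0) * P u w)"
    using Suc.IH by (auto intro!: sum.cong)
  also have "\<dots> = P a w"
    using a by (auto simp: if_distrib[of "\<lambda>x. x * _"] sum.delta cong: if_cong)
  finally show ?case
    using P_absorbing[OF a Suc.prems] by simp
qed

lemma Pn_add: "w \<in> chi \<Longrightarrow> Pn P (m + n) v w = (\<Sum>u\<in>chi. Pn P m v u * Pn P n u w)"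
proof (induction n arbitrary: w)
  case 0
  then show ?case
    by (simp add: if_distrib[of "\<lambda>x. _ * x"] sum.delta cong: if_cong)
next
  case (Suc n)
  have "Pn P (m + Suc n) v w = (\<Sum>u'\<in>chi. \<Sum>u\<in>chi. Pn P m v u * Pn P n u u' * P u' w)"
    using Suc.IH by (simp add: sum_distrib_right)
  also have "\<dots> = (\<Sum>u\<in>chi. Pn P m v u * Pn P (Suc n) u w)"
    by (subst sum.swap) (simp add: sum_distrib_left mult.assoc)
  finally show ?case .
qed

lemma Pn_add_ge:
  assumes "v \<in> chi" "u \<in> chi" "w \<in> chi"
  shows "Pn P m v u * Pn P n u w \<le> Pn P (m + n) v w"
  unfolding Pn_add[OF assms(3)]
  using assms by (intro member_le_sum) (auto intro!: mult_nonneg_nonneg Pn_nonneg)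

lemma Pn_num_neg_pos: "u \<in> chi \<Longrightarrow> u \<noteq> - ones \<Longrightarrow> 0 < Pn P (num_neg u) u ones"
proof (induction "num_neg u" arbitrary: u)
  case 0
  then show ?case
    using num_neg_eq_0_imp_ones[of u] by simp
next
  case (Suc k)
  then obtain i where i: "u $ i = -1"
    unfolding num_neg_def by (metis (mono_tags, lifting) card.empty empty_Collect_eq nat.distinct(1))
  then have "u \<noteq> ones"
    by (auto simp: ones_def)
  have u': "flip i u \<in> chi" "flip i u \<noteq> - ones" "num_neg (flip i u) = k"
    using flip_in_chi[OF Suc.prems(1)] i Suc.hyps(2) num_neg_flip[OF i]
    by (auto simp: flip_def ones_def vec_eq_iff)
  have "0 < Pn P k (flip i u) ones"
    using Suc.hyps(1)[of "flip i u"] u' by simp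
  then have "0 < Pn P 1 u (flip i u) * Pn P k (flip i u) ones"
    unfolding Pn_one[OF Suc.prems(1)]
    using P_flip_pos[OF Suc.prems(1) \<open>u \<noteq> ones\<close> Suc.prems(2)] by simp
  also have "\<dots> \<le> Pn P (1 + k) u ones"
    by (rule Pn_add_ge[OF Suc.prems(1) u'(1) ones_in_chi(1)])
  finally show ?case
    using Suc.hyps(2) by simp
qed

lemma Pn_card_pos: "u \<in> chi \<Longrightarrow> u \<noteq> - ones \<Longrightarrow> 0 < Pn P CARD('n) u ones"
proof -
  assume u: "u \<in> chi" "u \<noteq> - ones"
  obtain r where r: "CARD('n) = num_neg u + r"
    using num_neg_le_card le_Suc_ex by blast
  have "0 < Pn P (num_neg u) u ones * Pn P r ones ones"
    using Pn_num_neg_pos[OF u] Pn_absorbing[of ones ones r] by simp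
  also have "\<dots> \<le> Pn P CARD('n) u ones"
    unfolding r using u by (intro Pn_add_ge) auto
  finally show ?thesis .
qed

text \<open>The cap \<open>\<delta> \<le> 1/2\<close> lets the constant \<open>2\<close> in the geometric decay below absorb the
  remainder \<open>n mod N\<close>.\<close>
lemma uniform_absorption_in_card_steps:
  obtains \<delta> where "0 < \<delta>" "\<delta> \<le> 1/2" "\<And>u. u \<in> transient \<Longrightarrow> \<delta> \<le> Pn P CARD('n) u ones"
proof (cases "transient = ({} :: (real^'n) set)")
  case True
  then show ?thesis
    using that[of "1/2"] by auto
next
  case False
  define m where "m = Min ((\<lambda>u. Pn P CARD('n) u ones) ` transient)"
  have "0 < m"
    using False Pn_card_pos unfolding m_def by (auto simp: transient_def)
  moreover have "m \<le> Pn P CARD('n) u ones" if "u \<in> transient" for u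
    unfolding m_def using that by (intro Min_le) (auto simp: transient_def)
  ultimately show ?thesis
    by (intro that[of "min (1/2) m"]) (auto simp: min_le_iff_disj)
qed

definition transient_mass :: "nat \<Rightarrow> real^'n \<Rightarrow> real" where
  "transient_mass n v = (\<Sum>w\<in>transient. Pn P n v w)"

lemma transient_mass_eq: "v \<in> chi \<Longrightarrow> transient_mass n v = 1 - Pn P n v ones - Pn P n v (- ones)"
proof -
  assume v: "v \<in> chi"
  have "(\<Sum>w\<in>chi. Pn P n v w) = (\<Sum>w\<in>{ones, - ones} \<union> transient. Pn P n v w)"
    by (rule sum.cong) (auto simp: transient_def)
  also have "\<dots> = Pn P n v ones + Pn P n v (- ones) + transient_mass n v"
    unfolding transient_mass_def by (subst sum.union_disjoint) (auto simp: transient_def)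
  finally show ?thesis
    using Pn_row_sum[OF v] by simp
qed

lemma transient_mass_nonneg: "v \<in> chi \<Longrightarrow> 0 \<le> transient_mass n v"
  unfolding transient_mass_def transient_def by (auto intro!: sum_nonneg Pn_nonneg)

lemma transient_mass_absorbing: "a \<in> {ones, - ones} \<Longrightarrow> transient_mass n a = 0"
  unfolding transient_mass_def transient_def by (auto intro!: sum.neutral simp: Pn_absorbing)

lemma transient_mass_add_card:
  assumes v: "v \<in> chi" and \<delta>: "\<And>u. u \<in> transient \<Longrightarrow> \<delta> \<le> Pn P CARD('n) u ones"
  shows "transient_mass (n + CARD('n)) v \<le> (1 - \<delta>) * transient_mass n v"
proof -
  have "transient_mass (n + CARD('n)) v
      = (\<Sum>w\<in>transient. \<Sum>u\<in>chi. Pn P n v u * Pn P CARD('n) u w)"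
    unfolding transient_mass_def by (intro sum.cong refl Pn_add) (auto simp: transient_def)
  also have "\<dots> = (\<Sum>u\<in>chi. Pn P n v u * transient_mass CARD('n) u)"
    unfolding transient_mass_def sum_distrib_left by (rule sum.swap)
  also have "\<dots> = (\<Sum>u\<in>transient. Pn P n v u * transient_mass CARD('n) u)"
    by (rule sum.mono_neutral_right) (auto simp: transient_def transient_mass_absorbing)
  also have "\<dots> \<le> (\<Sum>u\<in>transient. Pn P n v u * (1 - \<delta>))"
  proof (rule sum_mono, rule mult_left_mono)
    fix u :: "real^'n" assume u: "u \<in> transient"
    then have "u \<in> chi"
      by (simp add: transient_def)
    then show "transient_mass CARD('n) u \<le> 1 - \<delta>"
      using \<delta>[OF u] Pn_nonneg[of u "- ones" "CARD('n)"] by (simp add: transient_mass_eq)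
    show "0 \<le> Pn P n v u"
      using u v by (simp add: Pn_nonneg transient_def)
  qed
  also have "\<dots> = (1 - \<delta>) * transient_mass n v"
    unfolding transient_mass_def sum_distrib_left by (simp add: mult.commute)
  finally show ?thesis .
qed

lemma transient_mass_geometric_decay:
  obtains \<rho> where "0 \<le> \<rho>" "\<rho> < 1" "\<And>v n. v \<in> chi \<Longrightarrow> transient_mass n v \<le> 2 * \<rho> ^ n"
proof -
  obtain \<delta> where \<delta>: "0 < \<delta>" "\<delta> \<le> 1/2" "\<And>u. u \<in> transient \<Longrightarrow> \<delta> \<le> Pn P CARD('n) u ones"
    using uniform_absorption_in_card_steps by blast
  let ?N = "CARD('n)"
  define \<rho> where "\<rho> = (1 - \<delta>) powr (1 / ?N)"
  have \<rho>: "0 \<le> \<rho>" "\<rho> < 1" "\<rho> ^ ?N = 1 - \<delta>"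
    using \<delta> by (simp_all add: \<rho>_def powr01_less_one powr_realpow[symmetric] powr_powr)
  have power: "transient_mass (k * ?N + r) v \<le> (1 - \<delta>) ^ k" if v: "v \<in> chi" for v k r
  proof (induction k)
    case 0
    then show ?case
      using Pn_nonneg[OF v, of ones r] Pn_nonneg[OF v, of "- ones" r] by (simp add: transient_mass_eq[OF v])
  next
    case (Suc k)
    have "transient_mass (k * ?N + r + ?N) v \<le> (1 - \<delta>) * transient_mass (k * ?N + r) v"
      by (rule transient_mass_add_card[OF v \<delta>(3)])
    also have "\<dots> \<le> (1 - \<delta>) * (1 - \<delta>) ^ k"
      using Suc \<delta>(2) by (intro mult_left_mono) auto
    finally show ?case
      by (simp add: add.commute add.left_commute)
  qed
  have decay: "transient_mass n v \<le> 2 * \<rho> ^ n" if v: "v \<in> chi" for v n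
  proof -
    have "transient_mass n v \<le> (1 - \<delta>) ^ (n div ?N)"
      using power[OF v, of "n div ?N" "n mod ?N"] by simp
    also have "\<dots> \<le> 2 * ((1 - \<delta>) ^ (n div ?N) * (1 - \<delta>))"
      using \<delta> by (simp add: mult_left_mono)
    also have "\<dots> = 2 * (\<rho> ^ (?N * (n div ?N)) * \<rho> ^ ?N)"
      by (simp only: power_mult \<rho>(3))
    also have "\<dots> \<le> 2 * (\<rho> ^ (?N * (n div ?N)) * \<rho> ^ (n mod ?N))"
      using \<rho> by (intro mult_left_mono power_decreasing) auto
    also have "\<dots> = 2 * \<rho> ^ n"
      by (simp add: power_add[symmetric])
    finally show ?thesis .
  qed
  show ?thesis
    by (rule that[OF \<rho>(1,2) decay])
qed

lemma Pn_absorbing_incseq: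
  assumes v: "v \<in> chi" and a: "a \<in> {ones, - ones}"
  shows "incseq (\<lambda>n. Pn P n v a)"
proof (rule incseq_SucI)
  fix n
  have a_chi: "a \<in> chi"
    using a by auto
  have "Pn P n v a * Pn P 1 a a \<le> Pn P (n + 1) v a"
    by (rule Pn_add_ge[OF v a_chi a_chi])
  then show "Pn P n v a \<le> Pn P (Suc n) v a"
    using Pn_absorbing[OF a a_chi, of 1] by (simp del: Pn.simps)
qed

lemma bdd_above_Pn: "v \<in> chi \<Longrightarrow> w \<in> chi \<Longrightarrow> bdd_above (range (\<lambda>n. Pn P n v w))"
  by (intro bdd_aboveI[of _ 1]) (auto simp: Pn_le_one)

lemma absorb_prob_eq_SUP:
  assumes v: "v \<in> chi"
  shows "absorb_prob P v = (SUP n. Pn P n v (- ones))"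
proof -
  have "(\<lambda>n. Pn P n v (- ones)) \<longlonglongrightarrow> (SUP n. Pn P n v (- ones))"
    using v by (intro LIMSEQ_incseq_SUP bdd_above_Pn Pn_absorbing_incseq) auto
  then show ?thesis
    unfolding absorb_prob_def by (rule limI)
qed

lemma Pn_le_absorb_prob: "v \<in> chi \<Longrightarrow> Pn P n v (- ones) \<le> absorb_prob P v"
  unfolding absorb_prob_eq_SUP by (intro cSUP_upper bdd_above_Pn) auto

lemma absorb_prob_le: "v \<in> chi \<Longrightarrow> absorb_prob P v \<le> 1 - Pn P n v ones"
proof -
  assume v: "v \<in> chi"
  have "Pn P m v (- ones) \<le> 1 - Pn P n v ones" for m
  proof -
    let ?k = "max m n"
    have "Pn P m v (- ones) \<le> Pn P ?k v (- ones)" "Pn P n v ones \<le> Pn P ?k v ones"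
      using Pn_absorbing_incseq[OF v] by (auto simp: incseq_def)
    then show ?thesis
      using transient_mass_eq[OF v, of ?k] transient_mass_nonneg[OF v, of ?k] by linarith
  qed
  then show ?thesis
    unfolding absorb_prob_eq_SUP[OF v] by (intro cSUP_least) auto
qed

lemma absorb_prob_bounds: "v \<in> chi \<Longrightarrow> 0 \<le> absorb_prob P v \<and> absorb_prob P v \<le> 1"
  using Pn_le_absorb_prob[of v 0] absorb_prob_le[of v 0] by (auto split: if_splits)

end

section \<open>Poisson mixtures of the jump chain\<close>

definition poisson_weight :: "real \<Rightarrow> nat \<Rightarrow> real" where
  "poisson_weight \<mu> n = exp (- \<mu>) * \<mu> ^ n / fact n"

lemma poisson_weight_nonneg: "0 \<le> \<mu> \<Longrightarrow> 0 \<le> poisson_weight \<mu> n"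
  by (simp add: poisson_weight_def)

lemma sums_poisson_weight_power: "(\<lambda>n. poisson_weight \<mu> n * r ^ n) sums (exp (- \<mu>) * exp (\<mu> * r))"
proof -
  have "(\<lambda>n. exp (- \<mu>) * ((\<mu> * r) ^ n /\<^sub>R fact n)) sums (exp (- \<mu>) * exp (\<mu> * r))"
    by (rule sums_mult[OF exp_converges])
  then show ?thesis
    by (simp add: poisson_weight_def divide_inverse power_mult_distrib mult_ac)
qed

lemma sums_poisson_weight: "poisson_weight \<mu> sums 1"
  using sums_poisson_weight_power[of \<mu> 1] by (simp add: exp_minus field_simps)

lemma summable_poisson_weight_mult:
  assumes "0 \<le> \<mu>" and c: "\<And>n. \<bar>c n\<bar> \<le> B"
  shows "summable (\<lambda>n. poisson_weight \<mu> n * c n)"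
proof (rule summable_comparison_test')
  show "summable (\<lambda>n. B * poisson_weight \<mu> n)"
    using sums_poisson_weight sums_summable summable_mult by blast
  show "norm (poisson_weight \<mu> n * c n) \<le> B * poisson_weight \<mu> n" for n
    using mult_left_mono[OF c[of n] poisson_weight_nonneg[OF assms(1)]] poisson_weight_nonneg[OF assms(1)]
    by (simp add: abs_mult mult.commute)
qed

lemma Pt_eq_suminf: "Pt P lam s v w = (\<Sum>n. poisson_weight (real CARD('n) * lam * s) n * Pn P n v (w :: real^'n))"
  by (simp add: Pt_def poisson_weight_def)

context flip_chain
begin

lemma sums_Pt:
  assumes "v \<in> chi" "w \<in> chi" "0 \<le> lam" "0 \<le> s"
  shows "(\<lambda>n. poisson_weight (real CARD('n) * lam * s) n * Pn P n v w) sums Pt P lam s v w"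
  unfolding Pt_eq_suminf using assms
  by (intro summable_sums summable_poisson_weight_mult[where B = 1])
     (auto simp: abs_le_iff Pn_le_one intro: order_trans[OF _ Pn_nonneg])

lemma Pt_absorbing_self:
  assumes "a \<in> {ones, - ones}" "0 \<le> lam" "0 \<le> s"
  shows "Pt P lam s a a = 1"
proof -
  have "Pt P lam s a a = (\<Sum>n. poisson_weight (real CARD('n) * lam * s) n)"
    unfolding Pt_eq_suminf using assms(1) by (auto simp: Pn_absorbing)
  then show ?thesis
    using sums_poisson_weight sums_unique by metis
qed

lemma Pt_absorption_deficit:
  assumes v: "v \<in> chi" and lam: "0 \<le> lam" and s: "0 \<le> s"
    and decay: "\<And>u n. u \<in> chi \<Longrightarrow> transient_mass n u \<le> 2 * \<rho> ^ n"
  shows "0 \<le> absorb_prob P v - Pt P lam s v (- ones)"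
    and "0 \<le> (1 - absorb_prob P v) - Pt P lam s v ones"
    and "(absorb_prob P v - Pt P lam s v (- ones)) + ((1 - absorb_prob P v) - Pt P lam s v ones)
           \<le> 2 * exp (- (real CARD('n) * lam * s * (1 - \<rho>)))"
proof -
  let ?\<mu> = "real CARD('n) * lam * s" and ?q = "absorb_prob P v"
  let ?w = "poisson_weight ?\<mu>"
  have \<mu>: "0 \<le> ?\<mu>"
    using lam s by simp
  have const: "(\<lambda>n. ?w n * c) sums c" for c
    using sums_mult2[OF sums_poisson_weight[of ?\<mu>], of c] by simp
  have neg: "(\<lambda>n. ?w n * (?q - Pn P n v (- ones))) sums (?q - Pt P lam s v (- ones))"
    using sums_diff[OF const[of ?q] sums_Pt[OF v ones_in_chi(2) lam s]] by (simp only: right_diff_distrib)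
  have pos: "(\<lambda>n. ?w n * ((1 - ?q) - Pn P n v ones)) sums ((1 - ?q) - Pt P lam s v ones)"
    using sums_diff[OF const[of "1 - ?q"] sums_Pt[OF v ones_in_chi(1) lam s]] by (simp only: right_diff_distrib)
  show "0 \<le> ?q - Pt P lam s v (- ones)"
  proof (rule sums_le[OF _ sums_zero neg])
    show "0 \<le> ?w n * (?q - Pn P n v (- ones))" for n
      using Pn_le_absorb_prob[OF v, of n] poisson_weight_nonneg[OF \<mu>, of n] by simp
  qed
  show "0 \<le> (1 - ?q) - Pt P lam s v ones"
  proof (rule sums_le[OF _ sums_zero pos])
    show "0 \<le> ?w n * ((1 - ?q) - Pn P n v ones)" for n
      using absorb_prob_le[OF v, of n] poisson_weight_nonneg[OF \<mu>, of n] by simp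
  qed
  have "(\<lambda>n. ?w n * (?q - Pn P n v (- ones)) + ?w n * ((1 - ?q) - Pn P n v ones))
      = (\<lambda>n. ?w n * transient_mass n v)"
    by (simp add: transient_mass_eq[OF v] algebra_simps)
  then have mass: "(\<lambda>n. ?w n * transient_mass n v)
      sums ((?q - Pt P lam s v (- ones)) + ((1 - ?q) - Pt P lam s v ones))"
    using sums_add[OF neg pos] by simp
  have geometric: "(\<lambda>n. 2 * (?w n * \<rho> ^ n)) sums (2 * (exp (- ?\<mu>) * exp (?\<mu> * \<rho>)))"
    by (rule sums_mult[OF sums_poisson_weight_power])
  have "(?q - Pt P lam s v (- ones)) + ((1 - ?q) - Pt P lam s v ones)
      \<le> 2 * (exp (- ?\<mu>) * exp (?\<mu> * \<rho>))"
  proof (rule sums_le[OF _ mass geometric])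
    show "?w n * transient_mass n v \<le> 2 * (?w n * \<rho> ^ n)" for n
      using mult_left_mono[OF decay[OF v, of n] poisson_weight_nonneg[OF \<mu>, of n]] by (simp add: mult_ac)
  qed
  also have "exp (- ?\<mu>) * exp (?\<mu> * \<rho>) = exp (- (?\<mu> * (1 - \<rho>)))"
    by (simp add: exp_add[symmetric] algebra_simps)
  finally show "(?q - Pt P lam s v (- ones)) + ((1 - ?q) - Pt P lam s v ones)
      \<le> 2 * exp (- (?\<mu> * (1 - \<rho>)))" .
qed

end

section \<open>Bounded \<open>C\<^sup>1\<close> functions\<close>

definition sup_norm :: "('a \<Rightarrow> real) \<Rightarrow> real" where
  "sup_norm g = (SUP x. \<bar>g x\<bar>)"

definition partials_sup_norm :: "(real^'n \<Rightarrow> real^'n \<Rightarrow> real) \<Rightarrow> real" where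
  "partials_sup_norm f' = (\<Sum>i\<in>UNIV. sup_norm (\<lambda>x. f' x (axis i 1)))"

lemma C1norm_eq: "C1norm f f' = sup_norm f + partials_sup_norm f'"
  by (simp add: C1norm_def sup_norm_def partials_sup_norm_def)

lemma abs_le_sup_norm: "bounded (range g) \<Longrightarrow> \<bar>g x\<bar> \<le> sup_norm g"
  unfolding sup_norm_def
  by (rule cSUP_upper) (auto simp: bounded_iff bdd_above_def real_norm_def)

lemma sup_norm_nonneg: "bounded (range g) \<Longrightarrow> 0 \<le> sup_norm g"
  using abs_le_sup_norm[of g undefined] by linarith

lemma C1b_sup_norm_bounds:
  assumes "C1b f f'"
  shows "0 \<le> sup_norm f" "0 \<le> partials_sup_norm f'"
    "sup_norm f \<le> C1norm f f'" "partials_sup_norm f' \<le> C1norm f f'"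
proof -
  show f: "0 \<le> sup_norm f"
    using assms by (simp add: C1b_def sup_norm_nonneg)
  show f': "0 \<le> partials_sup_norm f'"
    using assms unfolding partials_sup_norm_def by (auto simp: C1b_def intro!: sum_nonneg sup_norm_nonneg)
  show "sup_norm f \<le> C1norm f f'" "partials_sup_norm f' \<le> C1norm f f'"
    using f f' by (simp_all add: C1norm_eq)
qed

lemma C1b_lipschitz:
  fixes f :: "real^'n \<Rightarrow> real"
  assumes "C1b f f'"
  shows "\<bar>f a - f b\<bar> \<le> partials_sup_norm f' * norm (a - b)"
proof -
  have deriv: "\<And>x. (f has_derivative f' x) (at x)"
    and bounded: "\<And>i. bounded (range (\<lambda>x. f' x (axis i 1)))"
    using assms by (auto simp: C1b_def)
  have "onorm (f' x) \<le> partials_sup_norm f'" for x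
  proof (rule onorm_le)
    fix h :: "real^'n"
    have "f' x h = f' x (\<Sum>i\<in>UNIV. h $ i *\<^sub>R axis i 1)"
      using basis_expansion[of h] by (simp add: scalar_mult_eq_scaleR)
    also have "\<dots> = (\<Sum>i\<in>UNIV. h $ i * f' x (axis i 1))"
      using has_derivative_linear[OF deriv] by (simp add: linear_sum linear_scale)
    finally have "\<bar>f' x h\<bar> \<le> (\<Sum>i\<in>UNIV. \<bar>h $ i\<bar> * \<bar>f' x (axis i 1)\<bar>)"
      by (metis (no_types, lifting) abs_mult sum.cong sum_abs)
    also have "\<dots> \<le> (\<Sum>i\<in>UNIV. norm h * sup_norm (\<lambda>x. f' x (axis i 1)))"
      by (intro sum_mono mult_mono component_le_norm_cart abs_le_sup_norm bounded) auto
    finally show "norm (f' x h) \<le> partials_sup_norm f' * norm h"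
      by (simp add: partials_sup_norm_def sum_distrib_left mult.commute)
  qed
  then have "norm (f a - f b) \<le> partials_sup_norm f' * norm (a - b)"
    using deriv by (intro differentiable_bound[of UNIV]) auto
  then show ?thesis
    by simp
qed

section \<open>Path integrals of right continuous processes\<close>

lemma right_continuous_sequentially:
  fixes g :: "real \<Rightarrow> 'b::metric_space"
  assumes "continuous (at_right u) g" "\<And>i. u \<le> x i" "x \<longlonglongrightarrow> u"
  shows "(\<lambda>i. g (x i)) \<longlonglongrightarrow> g u"
  using assms unfolding at_within_Ici_at_right[symmetric] continuous_within_sequentially
  by (auto simp: o_def)

definition clamp_time :: "real \<Rightarrow> real \<Rightarrow> real" where
  "clamp_time t s = max 0 (min t s)"

definition grid_index :: "real \<Rightarrow> nat \<Rightarrow> real \<Rightarrow> nat" where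
  "grid_index t m s = nat \<lceil>real m * clamp_time t s / t\<rceil>"

lemma grid_index_bounds:
  assumes t: "0 < t" and m: "0 < m"
  shows "grid_index t m s \<le> m"
    and "clamp_time t s \<le> t * real (grid_index t m s) / real m"
    and "t * real (grid_index t m s) / real m \<le> clamp_time t s + t / real m"
    and "\<lceil>real m * clamp_time t s / t\<rceil> = int (grid_index t m s)"
proof -
  let ?y = "real m * clamp_time t s / t"
  have c: "0 \<le> clamp_time t s" "clamp_time t s \<le> t"
    using t by (auto simp: clamp_time_def)
  have "real m * clamp_time t s \<le> real m * t"
    using c by (intro mult_left_mono) auto
  then have y: "0 \<le> ?y" "?y \<le> real m"
    using c t by (simp_all add: field_simps)
  then show ceiling: "\<lceil>?y\<rceil> = int (grid_index t m s)"
    by (simp add: grid_index_def)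
  show "grid_index t m s \<le> m"
    using y by (simp add: grid_index_def nat_le_iff ceiling_le_iff)
  have "?y \<le> real (grid_index t m s)" "real (grid_index t m s) \<le> ?y + 1"
    using le_of_int_ceiling[of ?y] of_int_ceiling_le_add_one[of ?y] ceiling by simp_all
  then show "clamp_time t s \<le> t * real (grid_index t m s) / real m"
    and "t * real (grid_index t m s) / real m \<le> clamp_time t s + t / real m"
    using t m by (simp_all add: field_simps)
qed

locale right_continuous_process =
  fixes V :: "real \<Rightarrow> 'a \<Rightarrow> 'b::euclidean_space" and M :: "'a measure" and B :: real
  assumes V_borel_measurable: "\<And>s. 0 \<le> s \<Longrightarrow> V s \<in> borel_measurable M"
    and norm_V_le: "\<And>\<omega> s. \<omega> \<in> space M \<Longrightarrow> 0 \<le> s \<Longrightarrow> norm (V s \<omega>) \<le> B"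
    and V_right_continuous: "\<And>\<omega> s. \<omega> \<in> space M \<Longrightarrow> 0 \<le> s \<Longrightarrow> continuous (at_right s) (\<lambda>s. V s \<omega>)"
begin

text \<open>The paths are only right continuous, so joint measurability in \<open>(\<omega>, s)\<close> is obtained by
  approximating each time from the right by a grid point.\<close>
lemma grid_process_measurable:
  assumes t: "0 < t" and m: "0 < m"
  shows "(\<lambda>p. V (t * real (grid_index t m (snd p)) / real m) (fst p)) \<in> borel_measurable (M \<Otimes>\<^sub>M lborel)"
proof -
  let ?A = "\<lambda>k. {s. \<lceil>real m * clamp_time t s / t\<rceil> = int k}"
  have "V (t * real (grid_index t m s) / real m) \<omega>
      = (\<Sum>k\<le>m. indicator (?A k) s *\<^sub>R V (t * real k / real m) \<omega>)" for s \<omega>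
  proof -
    have "(\<Sum>k\<le>m. indicator (?A k) s *\<^sub>R V (t * real k / real m) \<omega>)
        = (\<Sum>k\<le>m. if k = grid_index t m s then V (t * real k / real m) \<omega> else 0)"
      using grid_index_bounds(4)[OF t m, of s] by (intro sum.cong) (auto simp: indicator_def)
    then show ?thesis
      using grid_index_bounds(1)[OF t m, of s] by (simp add: sum.delta)
  qed
  moreover have "?A k \<in> sets lborel" for k
    unfolding clamp_time_def by measurable
  then have "(\<lambda>p. \<Sum>k\<le>m. indicator (?A k) (snd p) *\<^sub>R V (t * real k / real m) (fst p))
      \<in> borel_measurable (M \<Otimes>\<^sub>M lborel)"
    using t by (intro borel_measurable_sum borel_measurable_scaleR measurable_compose[OF measurable_snd]
        measurable_compose[OF measurable_fst] V_borel_measurable) auto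
  ultimately show ?thesis
    by simp
qed

lemma grid_process_tendsto:
  assumes t: "0 < t" and \<omega>: "\<omega> \<in> space M"
  shows "(\<lambda>i. V (t * real (grid_index t (Suc i) s) / real (Suc i)) \<omega>) \<longlonglongrightarrow> V (clamp_time t s) \<omega>"
proof (rule right_continuous_sequentially)
  show "continuous (at_right (clamp_time t s)) (\<lambda>s. V s \<omega>)"
    using V_right_continuous[OF \<omega>] by (simp add: clamp_time_def)
  show "clamp_time t s \<le> t * real (grid_index t (Suc i) s) / real (Suc i)" for i
    using grid_index_bounds(2)[OF t, of "Suc i" s] by simp
  have upper: "(\<lambda>i. clamp_time t s + t / real (Suc i)) \<longlonglongrightarrow> clamp_time t s"
    using tendsto_add[OF tendsto_const LIMSEQ_Suc[OF lim_const_over_n[of t]]] by simp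
  show "(\<lambda>i. t * real (grid_index t (Suc i) s) / real (Suc i)) \<longlonglongrightarrow> clamp_time t s"
  proof (rule tendsto_sandwich[OF _ _ tendsto_const upper])
    show "\<forall>\<^sub>F i in sequentially. clamp_time t s \<le> t * real (grid_index t (Suc i) s) / real (Suc i)"
      by (intro always_eventually allI grid_index_bounds(2)[OF t]) simp
    show "\<forall>\<^sub>F i in sequentially.
        t * real (grid_index t (Suc i) s) / real (Suc i) \<le> clamp_time t s + t / real (Suc i)"
      by (intro always_eventually allI grid_index_bounds(3)[OF t]) simp
  qed
qed

lemma clamped_process_measurable:
  "0 < t \<Longrightarrow> (\<lambda>p. V (clamp_time t (snd p)) (fst p)) \<in> borel_measurable (M \<Otimes>\<^sub>M lborel)"
  by (rule borel_measurable_LIMSEQ_metric[OF grid_process_measurable grid_process_tendsto])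
     (auto simp: space_pair_measure)

lemma path_set_integrable:
  assumes t: "0 < t" and \<omega>: "\<omega> \<in> space M"
  shows "set_integrable lborel {0..t} (\<lambda>s. V (clamp_time t s) \<omega>)"
  unfolding set_integrable_def
proof (rule integrableI_bounded_set_indicator[where B = B])
  show "(\<lambda>s. V (clamp_time t s) \<omega>) \<in> borel_measurable lborel"
    using measurable_Pair2[OF clamped_process_measurable[OF t] \<omega>] by simp
qed (use t \<omega> in \<open>auto simp: norm_V_le clamp_time_def\<close>)

lemma path_integral:
  assumes t: "0 < t" and \<omega>: "\<omega> \<in> space M"
  shows "(\<lambda>s. V s \<omega>) integrable_on {0..t}"
    and "integral {0..t} (\<lambda>s. V s \<omega>) = (LINT s:{0..t}|lborel. V (clamp_time t s) \<omega>)"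
proof -
  have clamp: "V (clamp_time t s) \<omega> = V s \<omega>" if "s \<in> {0..t}" for s
    using that by (simp add: clamp_time_def)
  show "(\<lambda>s. V s \<omega>) integrable_on {0..t}"
    using set_borel_integral_eq_integral(1)[OF path_set_integrable[OF t \<omega>]]
      integrable_cong[of "{0..t}", OF clamp] by simp
  show "integral {0..t} (\<lambda>s. V s \<omega>) = (LINT s:{0..t}|lborel. V (clamp_time t s) \<omega>)"
    using set_borel_integral_eq_integral(2)[OF path_set_integrable[OF t \<omega>]]
      integral_cong[of "{0..t}", OF clamp] by simp
qed

lemma path_integral_measurable:
  assumes t: "0 < t"
  shows "(\<lambda>\<omega>. integral {0..t} (\<lambda>s. V s \<omega>)) \<in> borel_measurable M"
proof -
  have "(\<lambda>(\<omega>, s). indicator {0..t} s *\<^sub>R V (clamp_time t s) \<omega>) \<in> borel_measurable (M \<Otimes>\<^sub>M lborel)"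
    using clamped_process_measurable[OF t]
    by (simp add: case_prod_beta)
  then have "(\<lambda>\<omega>. LINT s:{0..t}|lborel. V (clamp_time t s) \<omega>) \<in> borel_measurable M"
    unfolding set_lebesgue_integral_def by (rule lborel.borel_measurable_lebesgue_integral)
  then show ?thesis
    by (rule measurable_cong[THEN iffD1, rotated]) (simp add: path_integral[OF t])
qed

end

section \<open>The fast and the slow process\<close>

lemma (in prob_space) expectation_near_two_values:
  fixes g :: "'a \<Rightarrow> real"
  assumes g: "g \<in> borel_measurable M" "\<And>\<omega>. \<bar>g \<omega>\<bar> \<le> S"
    and events: "A \<in> events" "B \<in> events" "A \<inter> B = {}"
    and near: "\<And>\<omega>. \<omega> \<in> A \<Longrightarrow> \<bar>g \<omega> - a\<bar> \<le> L" "\<And>\<omega>. \<omega> \<in> B \<Longrightarrow> \<bar>g \<omega> - b\<bar> \<le> L"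
    and L: "0 \<le> L"
  shows "\<bar>expectation g - (prob A * a + prob B * b)\<bar> \<le> L + S * (1 - prob A - prob B)"
proof -
  define R where "R = space M - A - B"
  define h where "h \<omega> = indicator A \<omega> * a + indicator B \<omega> * b" for \<omega>
  have "R = space M - (A \<union> B)"
    by (auto simp: R_def)
  then have R: "R \<in> events" "prob R = 1 - prob A - prob B"
    using events finite_measure_Union[OF events] prob_compl[of "A \<union> B"] by auto
  have integrable: "integrable M g" "integrable M h" "integrable M (\<lambda>\<omega>. L + S * indicator R \<omega>)"
    using g events R(1) unfolding h_def
    by (auto intro!: integrable_const_bound[where B = S] integrable_real_indicator simp: emeasure_eq_measure)
  have "A \<subseteq> space M" "B \<subseteq> space M"
    using events sets.sets_into_space by auto
  have "expectation h = expectation (\<lambda>\<omega>. indicator A \<omega> * a) + expectation (\<lambda>\<omega>. indicator B \<omega> * b)"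
    unfolding h_def using events
    by (intro Bochner_Integration.integral_add Bochner_Integration.integrable_mult_left integrable_real_indicator)
       (auto simp: emeasure_eq_measure)
  also have "\<dots> = prob A * a + prob B * b"
    using \<open>A \<subseteq> space M\<close> \<open>B \<subseteq> space M\<close> by (simp add: Int_absorb2)
  finally have expectation_h: "expectation h = prob A * a + prob B * b" .
  have pointwise: "\<bar>g \<omega> - h \<omega>\<bar> \<le> L + S * indicator R \<omega>" if "\<omega> \<in> space M" for \<omega>
    using that near[of \<omega>] g(2)[of \<omega>] events(3) L by (auto simp: h_def R_def indicator_def)
  have "\<bar>expectation g - expectation h\<bar> = \<bar>expectation (\<lambda>\<omega>. g \<omega> - h \<omega>)\<bar>"
    using integrable by simp
  also have "\<dots> \<le> expectation (\<lambda>\<omega>. \<bar>g \<omega> - h \<omega>\<bar>)"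
    by (rule integral_abs_bound)
  also have "\<dots> \<le> expectation (\<lambda>\<omega>. L + S * indicator R \<omega>)"
    using integrable pointwise by (intro Bochner_Integration.integral_mono) auto
  also have "\<dots> = L + S * prob R"
    using R(1) sets.sets_into_space[OF R(1)]
    by (subst Bochner_Integration.integral_add) (auto simp: Int_absorb2 prob_space emeasure_eq_measure)
  finally show ?thesis
    using R(2) expectation_h by simp
qed

lemma (in prob_space) abs_expectation_le:
  fixes g :: "'a \<Rightarrow> real"
  assumes bound: "\<And>\<omega>. \<bar>g \<omega>\<bar> \<le> S"
  shows "\<bar>expectation g\<bar> \<le> S"
proof (cases "integrable M g")
  case True
  have "\<bar>expectation g\<bar> \<le> expectation (\<lambda>\<omega>. \<bar>g \<omega>\<bar>)"
    by (rule integral_abs_bound)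
  also have "\<dots> \<le> expectation (\<lambda>\<omega>. S)"
    using True bound by (intro Bochner_Integration.integral_mono) auto
  finally show ?thesis
    by (simp add: prob_space)
next
  case False
  then show ?thesis
    using bound[of undefined] by (simp add: not_integrable_integral_eq)
qed

lemma abs_diff_reweighted_mixture_le:
  fixes e a b p q r L S :: real
  assumes near: "\<bar>e - (p * a + q * b)\<bar> \<le> L + S * (1 - p - q)"
    and bounds: "\<bar>a\<bar> \<le> S" "\<bar>b\<bar> \<le> S" and weights: "p \<le> 1 - r" "q \<le> r"
  shows "\<bar>e - (r * b + (1 - r) * a)\<bar> \<le> L + 2 * S * ((r - q) + ((1 - r) - p))"
proof -
  have "\<bar>((1 - r) - p) * a\<bar> \<le> ((1 - r) - p) * S" "\<bar>(r - q) * b\<bar> \<le> (r - q) * S"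
    using mult_left_mono[OF bounds(1), of "(1 - r) - p"] mult_left_mono[OF bounds(2), of "r - q"] weights
    by (simp_all add: abs_mult)
  then have "\<bar>((1 - r) - p) * a + (r - q) * b\<bar> \<le> S * ((r - q) + ((1 - r) - p))"
    using abs_triangle_ineq[of "((1 - r) - p) * a" "(r - q) * b"] by (simp add: algebra_simps)
  then show ?thesis
    using near abs_triangle_ineq4[of "e - (p * a + q * b)" "((1 - r) - p) * a + (r - q) * b"]
    by (simp add: algebra_simps)
qed

locale flip_fast_process = flip_chain P
  for P :: "real^'n \<Rightarrow> real^'n \<Rightarrow> real" +
  fixes lam :: real and v :: "real^'n" and M :: "'a measure" and V :: "real \<Rightarrow> 'a \<Rightarrow> real^'n"
  assumes fast_process: "fast_process P lam v M V"
    and v_in_chi: "v \<in> chi" and lam_pos: "0 < lam"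
begin

sublocale prob_space M
  using fast_process by (simp add: fast_process_def)

lemma V_in_chi: "\<omega> \<in> space M \<Longrightarrow> 0 \<le> s \<Longrightarrow> V s \<omega> \<in> chi"
  using fast_process by (simp add: fast_process_def)

sublocale right_continuous_process V M "real CARD('n)"
proof
  show "V s \<in> borel_measurable M" if "0 \<le> s" for s
    using fast_process that measurable_compose[of "V s" M "count_space UNIV" "\<lambda>x. x" borel]
    by (simp add: fast_process_def measurable_count_space_eq1)
  show "norm (V s \<omega>) \<le> real CARD('n)" if "\<omega> \<in> space M" "0 \<le> s" for \<omega> s
    using V_in_chi[OF that] by (rule norm_le_card_if_in_chi)
  show "continuous (at_right s) (\<lambda>s. V s \<omega>)" if "\<omega> \<in> space M" "0 \<le> s" for \<omega> s
    using fast_process that by (simp add: fast_process_def cadlag_def)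
qed

lemma prob_V_path:
  assumes "0 \<le> ts 0" "\<forall>i<n. ts i < ts (Suc i)" "\<forall>i\<le>n. ws i \<in> chi"
  shows "prob {\<omega>\<in>space M. \<forall>i\<le>n. V (ts i) \<omega> = ws i}
    = (\<Prod>i\<le>n. Pt P lam (ts i - (if i = 0 then 0 else ts (i - 1))) (if i = 0 then v else ws (i - 1)) (ws i))"
  using fast_process assms unfolding fast_process_def by blast

lemma prob_V_eq:
  assumes "0 \<le> r" "w \<in> chi"
  shows "prob {\<omega>\<in>space M. V r \<omega> = w} = Pt P lam r v w"
  using prob_V_path[of "\<lambda>_. r" 0 "\<lambda>_. w"] assms by simp

lemma prob_V_absorbed_twice:
  assumes "0 \<le> s" "s < r" and a: "a \<in> {ones, - ones}"
  shows "prob {\<omega>\<in>space M. V s \<omega> = a \<and> V r \<omega> = a} = Pt P lam s v a"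
proof -
  let ?ts = "\<lambda>i::nat. if i = 0 then s else r"
  have "prob {\<omega>\<in>space M. \<forall>i\<le>(1::nat). V (?ts i) \<omega> = a}
      = (\<Prod>i\<le>(1::nat). Pt P lam (?ts i - (if i = 0 then 0 else ?ts (i - 1))) (if i = 0 then v else a) a)"
    using assms by (intro prob_V_path) auto
  moreover have "{..(1::nat)} = {0, 1}"
    by auto
  moreover have "{\<omega>\<in>space M. \<forall>i\<le>(1::nat). V (?ts i) \<omega> = a} = {\<omega>\<in>space M. V s \<omega> = a \<and> V r \<omega> = a}"
    by (auto simp: le_Suc_eq)
  moreover have "Pt P lam (r - s) a a = 1"
    using assms lam_pos by (intro Pt_absorbing_self) auto
  ultimately show ?thesis
    by simp
qed

lemma V_level_set_in_events: "0 \<le> r \<Longrightarrow> {\<omega>\<in>space M. V r \<omega> = w} \<in> events"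
  using measurable_sets[OF V_borel_measurable, of r "{w}"] by (simp add: vimage_def Int_def conj_commute)

text \<open>Intersecting over countably many times keeps the event measurable; right continuity then
  forces the path to stay at \<open>a\<close> from time \<open>s\<close> on.\<close>
definition absorbed_event :: "real \<Rightarrow> real^'n \<Rightarrow> 'a set" where
  "absorbed_event s a = (\<Inter>r\<in>insert s (\<rat> \<inter> {s<..}). {\<omega>\<in>space M. V r \<omega> = a})"

lemma absorbed_event_in_events: "0 \<le> s \<Longrightarrow> absorbed_event s a \<in> events"
  unfolding absorbed_event_def
  by (intro sets.countable_INT') (auto intro!: V_level_set_in_events intro: countable_subset[OF _ countable_rat])

lemma prob_absorbed_event:
  assumes s: "0 \<le> s" and a: "a \<in> {ones, - ones}"
  shows "prob (absorbed_event s a) = Pt P lam s v a"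
proof -
  let ?E = "\<lambda>r. {\<omega>\<in>space M. V r \<omega> = a}"
  have "AE \<omega> in M. V s \<omega> = a \<longrightarrow> V r \<omega> = a" if r: "r \<in> \<rat> \<inter> {s<..}" for r
  proof -
    have r0: "s < r" "0 \<le> r"
      using r s by auto
    have "?E s \<inter> ?E r = {\<omega>\<in>space M. V s \<omega> = a \<and> V r \<omega> = a}"
      by auto
    then have "prob (?E s - ?E r) = 0"
      using finite_measure_Diff'[OF V_level_set_in_events[OF s] V_level_set_in_events[OF r0(2)]]
        prob_V_eq[OF s] prob_V_absorbed_twice[OF s r0(1) a] a by auto
    then have "?E s - ?E r \<in> null_sets M"
      using V_level_set_in_events[OF s] V_level_set_in_events[OF r0(2)]
      by (intro null_setsI) (auto simp: emeasure_eq_measure)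
    from AE_not_in[OF this] AE_space show ?thesis
      by eventually_elim auto
  qed
  then have "AE \<omega> in M. \<forall>r\<in>\<rat> \<inter> {s<..}. V s \<omega> = a \<longrightarrow> V r \<omega> = a"
    by (rule AE_ball_countable') (auto intro: countable_subset[OF _ countable_rat])
  then have "AE \<omega> in M. (\<omega> \<in> absorbed_event s a) = (\<omega> \<in> ?E s)"
    by eventually_elim (auto simp: absorbed_event_def)
  then have "prob (absorbed_event s a) = prob (?E s)"
    by (rule measure_eq_AE) (use absorbed_event_in_events[OF s] V_level_set_in_events[OF s] in auto)
  then show ?thesis
    using prob_V_eq[OF s] a by auto
qed

lemma V_eq_on_absorbed_event:
  assumes \<omega>: "\<omega> \<in> absorbed_event s a" and s: "0 \<le> s" "s \<le> r"
  shows "V r \<omega> = a"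
proof (rule ccontr)
  assume ne: "V r \<omega> \<noteq> a"
  have \<omega>_space: "\<omega> \<in> space M" and "V s \<omega> = a"
    using \<omega> by (auto simp: absorbed_event_def)
  then have "s \<noteq> r"
    using ne by auto
  with s(2) have "s < r"
    by simp
  have "((\<lambda>s. V s \<omega>) \<longlongrightarrow> V r \<omega>) (at_right r)"
    using V_right_continuous[OF \<omega>_space, of r] s by (simp add: continuous_within)
  then have "\<forall>\<^sub>F y in at_right r. dist (V y \<omega>) (V r \<omega>) < dist (V r \<omega>) a"
    using ne by (intro tendstoD) auto
  then obtain b where b: "r < b" "\<And>y. r < y \<Longrightarrow> y < b \<Longrightarrow> dist (V y \<omega>) (V r \<omega>) < dist (V r \<omega>) a"
    by (auto simp: eventually_at_right_field)
  obtain y where y: "y \<in> \<rat>" "r < y" "y < b"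
    using Rats_dense_in_real[OF b(1)] by blast
  then have "V y \<omega> = a"
    using \<omega> \<open>s < r\<close> by (auto simp: absorbed_event_def)
  then show False
    using b(2)[OF y(2,3)] by (simp add: dist_commute)
qed

lemma slow_process_near_absorbed:
  assumes t: "0 < t" and s: "0 \<le> s" "s \<le> t" and a: "a \<in> {ones, - ones}"
    and \<omega>: "\<omega> \<in> absorbed_event s a"
  shows "norm (slow_process V x t \<omega> - (x + t *\<^sub>R a)) \<le> 2 * real CARD('n) * s"
proof -
  have \<omega>_space: "\<omega> \<in> space M"
    using \<omega> by (auto simp: absorbed_event_def)
  let ?h = "\<lambda>r. V r \<omega> - a"
  have h_integrable: "?h integrable_on {0..t}"
    using path_integral(1)[OF t \<omega>_space] by (intro integrable_diff) auto
  have "integral {0..t} ?h = integral {0..t} (\<lambda>r. V r \<omega>) - integral {0..t} (\<lambda>r. a)"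
    by (rule integral_diff[OF path_integral(1)[OF t \<omega>_space] integrable_const_ivl])
  then have "slow_process V x t \<omega> - (x + t *\<^sub>R a) = integral {0..t} ?h"
    using t by (simp add: slow_process_def integral_const_real)
  also have "\<dots> = integral {0..s} ?h + integral {s..t} ?h"
    using Henstock_Kurzweil_Integration.integral_combine[OF s h_integrable] by simp
  also have "integral {s..t} ?h = integral {s..t} (\<lambda>_. 0)"
    by (rule integral_cong) (use V_eq_on_absorbed_event[OF \<omega> s(1)] in auto)
  finally have eq: "slow_process V x t \<omega> - (x + t *\<^sub>R a) = integral {0..s} ?h"
    by simp
  have "norm (integral {0..s} ?h) \<le> (2 * real CARD('n)) * Henstock_Kurzweil_Integration.content {0..s}"
  proof (rule has_integral_bound_real[where S = "{}"])
    show "(?h has_integral integral {0..s} ?h) {0..s}"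
      using integrable_subinterval_real[OF h_integrable, of 0 s] s by (auto intro: integrable_integral)
    show "norm (?h r) \<le> 2 * real CARD('n)" if "r \<in> {0..s} - {}" for r
      using norm_triangle_ineq4[of "V r \<omega>" a] norm_V_le[OF \<omega>_space, of r]
        norm_le_card_if_in_chi[of a] a that by auto
  qed auto
  then show ?thesis
    using eq s by simp
qed

lemma slow_process_borel_measurable:
  "0 < t \<Longrightarrow> slow_process V x t \<in> borel_measurable M"
  unfolding slow_process_def by (intro borel_measurable_add borel_measurable_const path_integral_measurable)

lemma expectation_near_absorbed_values:
  fixes f :: "real^'n \<Rightarrow> real" and x :: "real^'n"
  assumes t: "0 < t" and s: "0 \<le> s" "s \<le> t" and f: "C1b f f'"
  shows "\<bar>expectation (\<lambda>\<omega>. f (slow_process V x t \<omega>))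
           - (Pt P lam s v ones * f (x + t *\<^sub>R ones) + Pt P lam s v (- ones) * f (x - t *\<^sub>R ones))\<bar>
         \<le> partials_sup_norm f' * (2 * real CARD('n) * s)
           + sup_norm f * (1 - Pt P lam s v ones - Pt P lam s v (- ones))"
proof -
  let ?g = "\<lambda>\<omega>. f (slow_process V x t \<omega>)" and ?L = "partials_sup_norm f' * (2 * real CARD('n) * s)"
  let ?A = "absorbed_event s ones" and ?B = "absorbed_event s (- ones)"
  have bounded: "bounded (range f)" and continuous: "continuous_on UNIV f"
    using f by (auto simp: C1b_def)
  have L: "0 \<le> ?L"
    using C1b_sup_norm_bounds(2)[OF f] s by simp
  have near: "\<bar>?g \<omega> - f (x + t *\<^sub>R a)\<bar> \<le> ?L" if "a \<in> {ones, - ones}" "\<omega> \<in> absorbed_event s a" for a \<omega>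
    using C1b_lipschitz[OF f, of "slow_process V x t \<omega>" "x + t *\<^sub>R a"] C1b_sup_norm_bounds(2)[OF f]
      mult_left_mono[OF slow_process_near_absorbed[OF t s that, of x]] by fastforce
  have "\<bar>expectation ?g - (prob ?A * f (x + t *\<^sub>R ones) + prob ?B * f (x - t *\<^sub>R ones))\<bar>
      \<le> ?L + sup_norm f * (1 - prob ?A - prob ?B)"
  proof (rule expectation_near_two_values[OF _ _ _ _ _ _ _ L])
    show "?g \<in> borel_measurable M"
      using slow_process_borel_measurable[OF t] borel_measurable_continuous_onI[OF continuous]
      by (rule measurable_compose)
    show "\<bar>?g \<omega>\<bar> \<le> sup_norm f" for \<omega>
      by (rule abs_le_sup_norm[OF bounded])
    show "?A \<in> events" "?B \<in> events"
      using absorbed_event_in_events[OF s(1)] by auto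
    show "?A \<inter> ?B = {}"
      by (auto simp: absorbed_event_def)
    show "\<bar>?g \<omega> - f (x + t *\<^sub>R ones)\<bar> \<le> ?L" if "\<omega> \<in> ?A" for \<omega>
      using near[of ones \<omega>] that by simp
    show "\<bar>?g \<omega> - f (x - t *\<^sub>R ones)\<bar> \<le> ?L" if "\<omega> \<in> ?B" for \<omega>
      using near[of "- ones" \<omega>] that by simp
  qed
  then show ?thesis
    using prob_absorbed_event[OF s(1)] by simp
qed

lemma expectation_slow_process_error:
  fixes f :: "real^'n \<Rightarrow> real" and x :: "real^'n"
  assumes t: "0 < t" and s: "0 \<le> s" "s \<le> t" and f: "C1b f f'"
    and decay: "\<And>u n. u \<in> chi \<Longrightarrow> transient_mass n u \<le> 2 * \<rho> ^ n"
  shows "\<bar>expectation (\<lambda>\<omega>. f (slow_process V x t \<omega>))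
           - (absorb_prob P v * f (x - t *\<^sub>R ones) + (1 - absorb_prob P v) * f (x + t *\<^sub>R ones))\<bar>
         \<le> C1norm f f' * (2 * real CARD('n) * s + 4 * exp (- (real CARD('n) * lam * s * (1 - \<rho>))))"
proof -
  let ?q = "absorb_prob P v" and ?S = "sup_norm f" and ?L = "partials_sup_norm f' * (2 * real CARD('n) * s)"
  let ?e = "exp (- (real CARD('n) * lam * s * (1 - \<rho>)))"
  have bounded: "bounded (range f)"
    using f by (simp add: C1b_def)
  have norms: "0 \<le> ?S" "?S \<le> C1norm f f'" "partials_sup_norm f' \<le> C1norm f f'"
    using C1b_sup_norm_bounds[OF f] by auto
  have deficit: "0 \<le> ?q - Pt P lam s v (- ones)" "0 \<le> (1 - ?q) - Pt P lam s v ones"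
    "(?q - Pt P lam s v (- ones)) + ((1 - ?q) - Pt P lam s v ones) \<le> 2 * ?e"
    using Pt_absorption_deficit[OF v_in_chi less_imp_le[OF lam_pos] s(1) decay] by auto
  have "\<bar>expectation (\<lambda>\<omega>. f (slow_process V x t \<omega>)) - (?q * f (x - t *\<^sub>R ones) + (1 - ?q) * f (x + t *\<^sub>R ones))\<bar>
      \<le> ?L + 2 * ?S * ((?q - Pt P lam s v (- ones)) + ((1 - ?q) - Pt P lam s v ones))"
    using expectation_near_absorbed_values[OF t s f] abs_le_sup_norm[OF bounded] deficit(1,2)
    by (intro abs_diff_reweighted_mixture_le) auto
  also have "\<dots> \<le> ?L + 2 * ?S * (2 * ?e)"
    using deficit(3) norms(1) by (intro add_left_mono mult_left_mono) auto
  also have "\<dots> \<le> C1norm f f' * (2 * real CARD('n) * s) + C1norm f f' * (4 * ?e)"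
    using norms s by (intro add_mono mult_right_mono) auto
  finally show ?thesis
    by (simp add: algebra_simps)
qed

lemma expectation_slow_process_error_trivial:
  fixes f :: "real^'n \<Rightarrow> real" and x :: "real^'n"
  assumes f: "C1b f f'"
  shows "\<bar>expectation (\<lambda>\<omega>. f (slow_process V x t \<omega>))
           - (absorb_prob P v * f (x - t *\<^sub>R ones) + (1 - absorb_prob P v) * f (x + t *\<^sub>R ones))\<bar>
         \<le> 2 * C1norm f f'"
proof -
  let ?q = "absorb_prob P v"
  have bounded: "bounded (range f)"
    using f by (simp add: C1b_def)
  have q: "0 \<le> ?q" "?q \<le> 1"
    using absorb_prob_bounds[OF v_in_chi] by auto
  have "\<bar>expectation (\<lambda>\<omega>. f (slow_process V x t \<omega>))\<bar> \<le> sup_norm f"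
    by (intro abs_expectation_le abs_le_sup_norm[OF bounded])
  moreover have "\<bar>?q * f (x - t *\<^sub>R ones) + (1 - ?q) * f (x + t *\<^sub>R ones)\<bar> \<le> ?q * sup_norm f + (1 - ?q) * sup_norm f"
    using q abs_le_sup_norm[OF bounded]
    by (intro order_trans[OF abs_triangle_ineq] add_mono) (auto simp: abs_mult intro: mult_left_mono)
  ultimately show ?thesis
    using C1b_sup_norm_bounds(3)[OF f] by (simp add: algebra_simps)
qed

lemma expectation_slow_process_error_rate:
  fixes f :: "real^'n \<Rightarrow> real" and x :: "real^'n"
  assumes t: "0 < t" and f: "C1b f f'"
    and decay: "\<And>u n. u \<in> chi \<Longrightarrow> transient_mass n u \<le> 2 * \<rho> ^ n"
    and K: "2 / t \<le> K" "2 * real CARD('n) \<le> K" "4 \<le> K"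
  shows "\<bar>expectation (\<lambda>\<omega>. f (slow_process V x t \<omega>))
           - (absorb_prob P v * f (x - t *\<^sub>R ones) + (1 - absorb_prob P v) * f (x + t *\<^sub>R ones))\<bar>
         \<le> K * C1norm f f' * (1 / sqrt lam + exp (- (real CARD('n) * (1 - \<rho>)) * sqrt lam))"
    (is "?err \<le> K * ?C * (1 / sqrt lam + ?e)")
proof -
  have C: "0 \<le> ?C"
    using C1b_sup_norm_bounds[OF f] by linarith
  have sqrt_lam: "0 < sqrt lam" "lam * (1 / sqrt lam) = sqrt lam"
    using lam_pos by (simp_all add: real_div_sqrt)
  have "real CARD('n) * lam * (1 / sqrt lam) * (1 - \<rho>) = real CARD('n) * (1 - \<rho>) * (lam * (1 / sqrt lam))"
    by (simp only: ac_simps)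
  then have exponent: "- (real CARD('n) * lam * (1 / sqrt lam) * (1 - \<rho>)) = - (real CARD('n) * (1 - \<rho>)) * sqrt lam"
    unfolding sqrt_lam(2) by simp
  show ?thesis
  proof (cases "1 / sqrt lam \<le> t")
    case True
    have "?err \<le> ?C * (2 * real CARD('n) * (1 / sqrt lam)
        + 4 * exp (- (real CARD('n) * lam * (1 / sqrt lam) * (1 - \<rho>))))"
      using sqrt_lam True by (intro expectation_slow_process_error[OF t _ True f decay]) simp
    also have "\<dots> = ?C * (2 * real CARD('n) * (1 / sqrt lam) + 4 * ?e)"
      unfolding exponent ..
    also have "\<dots> \<le> ?C * (K * (1 / sqrt lam) + K * ?e)"
      using C K sqrt_lam by (intro mult_left_mono add_mono mult_right_mono) auto
    finally show ?thesis
      by (simp add: algebra_simps)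
  next
    case False
    then have "2 \<le> 2 / t * (1 / sqrt lam)"
      using t sqrt_lam by (simp add: field_simps)
    also have "\<dots> \<le> K * (1 / sqrt lam)"
      using K(1) sqrt_lam by (intro mult_right_mono) auto
    also have "\<dots> \<le> K * (1 / sqrt lam + ?e)"
      using K(3) by (intro mult_left_mono) auto
    finally have "2 * ?C \<le> K * (1 / sqrt lam + ?e) * ?C"
      using C by (rule mult_right_mono)
    then have "2 * ?C \<le> K * ?C * (1 / sqrt lam + ?e)"
      by (simp add: mult_ac)
    then show ?thesis
      using expectation_slow_process_error_trivial[OF f, of x t] by linarith
  qed
qed

end

theorem mainTheorem1:
  fixes P :: "real^'n \<Rightarrow> real^'n \<Rightarrow> real"
  assumes "flip_kernel P"
  shows "\<forall>t>0. \<exists>K>0. \<exists>c1>0. \<forall>lam>0. \<forall>x v (f :: real^'n \<Rightarrow> real) f' (M :: 'a measure) V.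
           v \<in> chi \<longrightarrow> fast_process P lam v M V \<longrightarrow> C1b f f' \<longrightarrow>
           \<bar>integral\<^sup>L M (\<lambda>\<omega>. f (slow_process V x t \<omega>))
             - (absorb_prob P v * f (x - t *\<^sub>R ones) + (1 - absorb_prob P v) * f (x + t *\<^sub>R ones))\<bar>
           \<le> K * C1norm f f' * (1 / sqrt lam + exp (- c1 * sqrt lam))"
proof -
  interpret flip_chain P
    by (rule flip_chain.intro) (rule assms)
  obtain \<rho> where \<rho>: "\<rho> < 1" "\<And>v n. v \<in> chi \<Longrightarrow> transient_mass n v \<le> 2 * \<rho> ^ n"
    using transient_mass_geometric_decay by blast
  define c1 where "c1 = real CARD('n) * (1 - \<rho>)"
  define K where "K t = max (2 / t) (max (2 * real CARD('n)) 4)" for t :: real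
  have "0 < c1" "\<And>t. 0 < K t"
    using \<rho>(1) by (auto simp: c1_def K_def)
  moreover have "\<bar>integral\<^sup>L M (\<lambda>\<omega>. f (slow_process V x t \<omega>))
      - (absorb_prob P v * f (x - t *\<^sub>R ones) + (1 - absorb_prob P v) * f (x + t *\<^sub>R ones))\<bar>
      \<le> K t * C1norm f f' * (1 / sqrt lam + exp (- c1 * sqrt lam))"
    if "0 < t" "0 < lam" "v \<in> chi" "fast_process P lam v M V" "C1b f f'"
    for t lam x v and f :: "real^'n \<Rightarrow> real" and f' and M :: "'a measure" and V
  proof -
    interpret flip_fast_process P lam v M V
      using that by unfold_locales auto
    show ?thesis
      unfolding c1_def K_def using that \<rho>(2) by (intro expectation_slow_process_error_rate) auto
  qed
  ultimately show ?thesis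
    by blast
qed

end
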